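(* Let $W:\{0,1\}\to\mathcal{Y}$ and $V:\{0,1\}\to\mathcal{Z}$ be two binary-input discrete memoryless channels such that $\lvert\Delta_{V}\rvert \prec_{icx} \lvert\Delta_{W}\rvert$. Then $\lvert\Delta_{V^-}\rvert \prec_{icx} \lvert\Delta_{W^-}\rvert$ and $\lvert\Delta_{V^+}\rvert \prec_{icx} \lvert\Delta_{W^+}\rvert$.
   Context: For a binary-input discrete memoryless channel (B-DMC) $W:\{0,1\}\to\mathcal{Y}$ with transition probabilities $W(y|x)$, let $q_W(y)=\tfrac12\big(W(y|0)+W(y|1)\big)$ and, for $y$ with $q_W(y)>0$, $\Delta_W(y)=\frac{W(y|0)-W(y|1)}{W(y|0)+W(y|1)}$. With $Y\sim q_W$ (uniform input), $\Delta_W$ denotes the random variable $\Delta_W(Y)\in[-1,1]$ and $\lvert\Delta_W\rvert$ its absolute value. Ar\i kan's polarization transforms synthesize from two independent copies of $W$ the channels $W^-:\{0,1\}\to\mathcal{Y}^2$ and $W^+:\{0,1\}\to\mathcal{Y}^2\times\{0,1\}$ with $W^-(y_1y_2|u_1)=\sum_{u_2\in\{0,1\}}\tfrac12 W(y_1|u_1\oplus u_2)W(y_2|u_2)$ and $W^+(y_1y_2u_1|u_2)=\tfrac12 W(y_1|u_1\oplus u_2)W(y_2|u_2)$. For real random variables $X,Y$, $X\prec_{icx}Y$ (increasing convex order) means $\mathbb{E}[\phi(X)]\le\mathbb{E}[\phi(Y)]$ for all increasing convex functions $\phi$ for which the expectations exist. *)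

theory Defs
  imports "HOL-Analysis.Analysis"
begin

(* Binary input alphabet {0,1} is rendered as bool (False = 0, True = 1);
   xor u1 \<oplus> u2 is (u1 \<noteq> u2).  Output alphabets are finite types. *)

definition bdmc :: "(bool \<Rightarrow> 'y::finite \<Rightarrow> real) \<Rightarrow> bool" where
  "bdmc W \<longleftrightarrow> (\<forall>x y. 0 \<le> W x y) \<and> (\<forall>x. (\<Sum>y\<in>UNIV. W x y) = 1)"

definition qW :: "(bool \<Rightarrow> 'y \<Rightarrow> real) \<Rightarrow> 'y \<Rightarrow> real" where
  "qW W y = (W False y + W True y) / 2"

definition DeltaW :: "(bool \<Rightarrow> 'y \<Rightarrow> real) \<Rightarrow> 'y \<Rightarrow> real" where
  "DeltaW W y = (W False y - W True y) / (W False y + W True y)"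

(* E[phi(|Delta_W|)] with Y ~ q_W; outputs with q_W(y) = 0 carry weight 0 *)
definition exp_absDelta :: "(bool \<Rightarrow> 'y::finite \<Rightarrow> real) \<Rightarrow> (real \<Rightarrow> real) \<Rightarrow> real" where
  "exp_absDelta W \<phi> = (\<Sum>y\<in>UNIV. qW W y * \<phi> \<bar>DeltaW W y\<bar>)"

definition absDelta_icx ::
  "(bool \<Rightarrow> 'z::finite \<Rightarrow> real) \<Rightarrow> (bool \<Rightarrow> 'y::finite \<Rightarrow> real) \<Rightarrow> bool" where
  "absDelta_icx V W \<longleftrightarrow>
     (\<forall>\<phi>::real \<Rightarrow> real. mono \<phi> \<and> convex_on UNIV \<phi> \<longrightarrow> exp_absDelta V \<phi> \<le> exp_absDelta W \<phi>)"

definition chan_minus :: "(bool \<Rightarrow> 'y \<Rightarrow> real) \<Rightarrow> bool \<Rightarrow> 'y \<times> 'y \<Rightarrow> real" where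
  "chan_minus W u1 yy = (\<Sum>u2\<in>UNIV. (1/2) * W (u1 \<noteq> u2) (fst yy) * W u2 (snd yy))"

definition chan_plus :: "(bool \<Rightarrow> 'y \<Rightarrow> real) \<Rightarrow> bool \<Rightarrow> ('y \<times> 'y) \<times> bool \<Rightarrow> real" where
  "chan_plus W u2 yyu = (1/2) * W (snd yyu \<noteq> u2) (fst (fst yyu)) * W u2 (snd (fst yyu))"

end

theory Submission
  imports Defs
begin

text \<open>For independent outputs \<open>Y\<^sub>1, Y\<^sub>2\<close> of \<open>W\<close> one has \<open>\<Delta>\<^sub>W\<^sub>-(Y\<^sub>1,Y\<^sub>2) = \<Delta>\<^sub>W(Y\<^sub>1) \<Delta>\<^sub>W(Y\<^sub>2)\<close>, and
  \<open>E[\<phi>(\<bar>\<Delta>\<^sub>W\<^sub>+\<bar>) | Y\<^sub>1,Y\<^sub>2] = g(\<bar>\<Delta>\<^sub>W(Y\<^sub>1)\<bar>, \<bar>\<Delta>\<^sub>W(Y\<^sub>2)\<bar>)\<close> for a kernel \<open>g\<close> built from the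
  perspective \<open>y \<phi>(x/y)\<close> of \<open>\<phi>\<close>. For monotone convex \<open>\<phi>\<close>, both \<open>\<phi>(s t)\<close> and \<open>g(s,t)\<close> are
  monotone and convex in each argument on \<open>[0,1]\<close>, so the order can be transported through one
  copy at a time. Test functions that are only monotone and convex on \<open>[0,1]\<close> are admissible,
  because \<open>\<bar>\<Delta>\<bar>\<close> takes finitely many values there and on a finite set such a function agrees with
  a monotone convex function on all of \<open>\<real>\<close>.\<close>

section \<open>Monotone convex functions on the reals\<close>

lemma convex_on_slope_mono:
  fixes h :: "real \<Rightarrow> real"
  assumes "convex_on I h" "a \<in> I" "b \<in> I" "a < p" "p < b"
  shows "(h p - h a) / (p - a) \<le> (h b - h p) / (b - p)"
proof -
  have "(h a - h p) / (a - p) \<le> (h p - h b) / (p - b)"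
    using convex_on_slope_le[OF assms] by linarith
  moreover have "(h p - h a) / (p - a) = (h a - h p) / (a - p)" "(h b - h p) / (b - p) = (h p - h b) / (p - b)"
    by (metis minus_diff_eq minus_divide_divide)+
  ultimately show ?thesis by simp
qed

lemma mono_convex_Max_affine:
  fixes a c :: "'p \<Rightarrow> real"
  assumes "finite S" "S \<noteq> {}" "\<And>p. p \<in> S \<Longrightarrow> 0 \<le> c p"
  defines "\<psi> \<equiv> \<lambda>x. Max ((\<lambda>p. a p + c p * x) ` S)"
  shows "mono \<psi>" and "convex_on UNIV \<psi>"
proof -
  have ge: "a p + c p * x \<le> \<psi> x" if "p \<in> S" for p x
    unfolding \<psi>_def using assms(1) that by (intro Max_ge) auto
  have le: "\<psi> x \<le> B" if "\<And>p. p \<in> S \<Longrightarrow> a p + c p * x \<le> B" for x B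
    unfolding \<psi>_def using assms(1,2) that by (subst Max_le_iff) auto
  show "mono \<psi>"
  proof (rule monoI, rule le)
    fix x y :: real and p assume "x \<le> y" "p \<in> S"
    then have "a p + c p * x \<le> a p + c p * y"
      using assms(3) by (simp add: mult_left_mono)
    also have "\<dots> \<le> \<psi> y" using ge \<open>p \<in> S\<close> .
    finally show "a p + c p * x \<le> \<psi> y" .
  qed
  show "convex_on UNIV \<psi>"
  proof (rule convex_onI, rule le)
    fix t x y :: real and p assume t: "0 < t" "t < 1" and "p \<in> S"
    have "a p + c p * ((1 - t) *\<^sub>R x + t *\<^sub>R y) = (1 - t) * (a p + c p * x) + t * (a p + c p * y)"
      by (simp add: algebra_simps)
    also have "\<dots> \<le> (1 - t) * \<psi> x + t * \<psi> y"
      using t ge[OF \<open>p \<in> S\<close>] by (intro add_mono mult_left_mono) auto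
    finally show "a p + c p * ((1 - t) *\<^sub>R x + t *\<^sub>R y) \<le> (1 - t) * \<psi> x + t * \<psi> y" .
  qed simp
qed

text \<open>The extension is a maximum of lines through the points of \<open>S\<close>: taking as slope at \<open>p\<close> the
  largest chord slope into \<open>p\<close> from the left (or \<open>0\<close>) makes every line lie below \<open>h\<close> on \<open>S\<close>,
  and the slopes are nonnegative, so the maximum is monotone.\<close>

lemma mono_convex_extension_finite:
  fixes h :: "real \<Rightarrow> real"
  assumes fin: "finite S" and sub: "S \<subseteq> I" and cv: "convex_on I h" and mo: "mono_on I h"
  obtains \<psi> where "mono \<psi>" "convex_on UNIV \<psi>" "\<And>p. p \<in> S \<Longrightarrow> \<psi> p = h p"
proof (cases "S = {}")
  case True
  then show ?thesis using that[of "\<lambda>_. 0"] by (auto simp: convex_on_const mono_def)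
next
  case False
  define c where "c p = Max (insert 0 ((\<lambda>q. (h p - h q) / (p - q)) ` {q\<in>S. q < p}))" for p
  have c_nonneg: "0 \<le> c p" for p
    unfolding c_def using fin by (intro Max_ge) auto
  have c_left: "(h p - h q) / (p - q) \<le> c p" if "q \<in> S" "q < p" for p q
    unfolding c_def using fin that by (intro Max_ge) auto
  have c_right: "c p \<le> (h q - h p) / (q - p)" if "p \<in> S" "q \<in> S" "p < q" for p q
  proof -
    have "h p \<le> h q"
      using mo that sub by (meson mono_onD subsetD less_imp_le)
    then have "0 \<le> (h q - h p) / (q - p)"
      using that by simp
    moreover have "(h p - h r) / (p - r) \<le> (h q - h p) / (q - p)" if "r \<in> S" "r < p" for r
      using convex_on_slope_mono[OF cv, of r q p] that \<open>p < q\<close> \<open>q \<in> S\<close> sub by auto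
    ultimately show ?thesis
      unfolding c_def using fin by (subst Max_le_iff) auto
  qed
  have support: "h p + c p * (q - p) \<le> h q" if "p \<in> S" "q \<in> S" for p q
  proof (cases q p rule: linorder_cases)
    case less
    then have "(h p - h q) / (p - q) * (p - q) \<le> c p * (p - q)"
      using c_left[OF that(2) less] by (intro mult_right_mono) auto
    moreover have "(h p - h q) / (p - q) * (p - q) = h p - h q"
      using less by simp
    ultimately show ?thesis by (simp add: algebra_simps)
  next
    case greater
    then have "c p * (q - p) \<le> (h q - h p) / (q - p) * (q - p)"
      using c_right[OF that greater] by (intro mult_right_mono) auto
    moreover have "(h q - h p) / (q - p) * (q - p) = h q - h p"
      using greater by simp
    ultimately show ?thesis by (simp add: algebra_simps)
  qed simp
  define \<psi> where "\<psi> x = Max ((\<lambda>p. (h p - c p * p) + c p * x) ` S)" for x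
  have "mono \<psi>" "convex_on UNIV \<psi>"
    unfolding \<psi>_def using mono_convex_Max_affine[OF fin False c_nonneg] by auto
  moreover have "\<psi> p = h p" if "p \<in> S" for p
  proof (rule antisym)
    show "\<psi> p \<le> h p"
      unfolding \<psi>_def using fin False support[OF _ that] by (subst Max_le_iff) (auto simp: algebra_simps)
    show "h p \<le> \<psi> p"
      unfolding \<psi>_def using fin by (auto intro!: Max_ge rev_image_eqI[OF that])
  qed
  ultimately show ?thesis using that by blast
qed

lemma mono_on_if_convex_on_min_left:
  fixes h :: "real \<Rightarrow> real"
  assumes cv: "convex_on {a..b} h" and min: "\<And>s. s \<in> {a..b} \<Longrightarrow> h a \<le> h s"
  shows "mono_on {a..b} h"
proof (rule mono_onI)
  fix x y assume x: "x \<in> {a..b}" and y: "y \<in> {a..b}" and "x \<le> y"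
  show "h x \<le> h y"
  proof (cases "y = a")
    case False
    then have "a < y" using y by auto
    define l where "l = (x - a) / (y - a)"
    have l: "0 \<le> l" "l \<le> 1"
      using x \<open>x \<le> y\<close> \<open>a < y\<close> by (auto simp: l_def)
    have "l * (y - a) = x - a"
      using \<open>a < y\<close> by (simp add: l_def)
    then have "x = (1 - l) *\<^sub>R a + l *\<^sub>R y"
      by (simp add: algebra_simps)
    then have "h x \<le> (1 - l) * h a + l * h y"
      using convex_onD[OF cv l, of a y] y by auto
    also have "\<dots> \<le> (1 - l) * h y + l * h y"
      using min[OF y] l by (simp add: mult_left_mono)
    finally show ?thesis by (simp add: algebra_simps)
  qed (use x \<open>x \<le> y\<close> in simp)
qed

lemma convex_on_mult_right:
  fixes \<phi> :: "real \<Rightarrow> real"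
  assumes "convex_on UNIV \<phi>"
  shows "convex_on UNIV (\<lambda>s. \<phi> (s * c))"
proof (rule convex_onI)
  fix l x y :: real assume "0 < l" "l < 1"
  then show "\<phi> (((1 - l) *\<^sub>R x + l *\<^sub>R y) * c) \<le> (1 - l) * \<phi> (x * c) + l * \<phi> (y * c)"
    using convex_onD[OF assms, of l "x * c" "y * c"] by (simp add: algebra_simps)
qed simp

section \<open>The perspective of a convex function\<close>

definition persp :: "(real \<Rightarrow> real) \<Rightarrow> real \<Rightarrow> real \<Rightarrow> real" where
  "persp \<phi> x y = y * \<phi> (x / y)"

lemma persp_scale: "persp \<phi> (c * x) (c * y) = c * persp \<phi> x y"
  by (cases "c = 0") (simp_all add: persp_def)

lemma persp_mono:
  assumes "mono \<phi>" "0 \<le> y" "x \<le> x'"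
  shows "persp \<phi> x y \<le> persp \<phi> x' y"
proof (cases "y = 0")
  case False
  then have "\<phi> (x / y) \<le> \<phi> (x' / y)"
    using assms by (intro monoD[OF assms(1)] divide_right_mono) auto
  then show ?thesis
    unfolding persp_def using assms(2) by (rule mult_left_mono)
qed (simp add: persp_def)

lemma persp_convex:
  assumes cv: "convex_on UNIV \<phi>" and uv: "0 \<le> u" "0 \<le> v" "u + v = 1"
    and y: "0 \<le> y1" "0 \<le> y2" "y1 = 0 \<Longrightarrow> x1 = 0" "y2 = 0 \<Longrightarrow> x2 = 0"
  shows "persp \<phi> (u * x1 + v * x2) (u * y1 + v * y2) \<le> u * persp \<phi> x1 y1 + v * persp \<phi> x2 y2"
proof -
  consider "y1 = 0" | "y2 = 0" | "y1 > 0" "y2 > 0"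
    using y by linarith
  then show ?thesis
  proof cases
    case 1
    then show ?thesis using y persp_scale[of \<phi> v x2 y2] by (simp add: persp_def)
  next
    case 2
    then show ?thesis using y persp_scale[of \<phi> u x1 y1] by (simp add: persp_def)
  next
    case 3
    define Y where "Y = u * y1 + v * y2"
    have "Y > 0"
      unfolding Y_def using 3 uv by (smt (verit) mult_pos_pos mult_nonneg_nonneg)
    text \<open>Jensen with the weights \<open>u y\<^sub>1 / Y\<close>, \<open>v y\<^sub>2 / Y\<close> at the points \<open>x\<^sub>1 / y\<^sub>1\<close>, \<open>x\<^sub>2 / y\<^sub>2\<close>.\<close>
    define m where "m = v * y2 / Y"
    have m: "0 \<le> m" "m \<le> 1" "1 - m = u * y1 / Y"
      using \<open>Y > 0\<close> uv 3 by (auto simp: m_def Y_def field_simps)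
    have "(u * x1 + v * x2) / Y = (u * y1 / Y) * (x1 / y1) + (v * y2 / Y) * (x2 / y2)"
      using 3 by (simp add: add_divide_distrib)
    then have "(u * x1 + v * x2) / Y = (1 - m) * (x1 / y1) + m * (x2 / y2)"
      unfolding m(3) by (simp only: m_def)
    then have "\<phi> ((u * x1 + v * x2) / Y) \<le> (1 - m) * \<phi> (x1 / y1) + m * \<phi> (x2 / y2)"
      using convex_onD[OF cv m(1,2), of "x1 / y1" "x2 / y2"] by simp
    then have "Y * \<phi> ((u * x1 + v * x2) / Y) \<le> Y * ((1 - m) * \<phi> (x1 / y1) + m * \<phi> (x2 / y2))"
      using \<open>Y > 0\<close> by simp
    also have "\<dots> = (Y * (1 - m)) * \<phi> (x1 / y1) + (Y * m) * \<phi> (x2 / y2)"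
      by (simp add: algebra_simps)
    also have "\<dots> = u * (y1 * \<phi> (x1 / y1)) + v * (y2 * \<phi> (x2 / y2))"
      using \<open>Y > 0\<close> by (simp add: m(3)) (simp add: m_def)
    finally show ?thesis unfolding persp_def Y_def .
  qed
qed

lemma persp_add_le:
  assumes "convex_on UNIV \<phi>" "0 \<le> y1" "0 \<le> y2" "y1 = 0 \<Longrightarrow> x1 = 0" "y2 = 0 \<Longrightarrow> x2 = 0"
  shows "persp \<phi> (x1 + x2) (y1 + y2) \<le> persp \<phi> x1 y1 + persp \<phi> x2 y2"
proof -
  have "persp \<phi> (x1 + x2) (y1 + y2) = 2 * persp \<phi> (x1 / 2 + x2 / 2) (y1 / 2 + y2 / 2)"
    using persp_scale[of \<phi> 2 "x1 / 2 + x2 / 2" "y1 / 2 + y2 / 2"] by simp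
  also have "\<dots> \<le> 2 * (persp \<phi> x1 y1 / 2 + persp \<phi> x2 y2 / 2)"
    using persp_convex[OF assms(1), of "1/2" "1/2" y1 y2 x1 x2] assms(2-) by simp
  finally show ?thesis by simp
qed

lemma convex_on_persp_affine:
  fixes f :: "real \<Rightarrow> real"
  assumes mo: "mono \<phi>" and cv: "convex_on UNIV \<phi>" and f: "convex_on I f"
    and nonneg: "\<And>s. s \<in> I \<Longrightarrow> 0 \<le> \<alpha> + \<beta> * s"
    and zero: "\<And>s. s \<in> I \<Longrightarrow> \<alpha> + \<beta> * s = 0 \<Longrightarrow> f s = 0"
  shows "convex_on I (\<lambda>s. persp \<phi> (f s) (\<alpha> + \<beta> * s))"
proof (rule convex_onI)
  fix l a b :: real assume l: "0 < l" "l < 1" and ab: "a \<in> I" "b \<in> I"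
  define s where "s = (1 - l) *\<^sub>R a + l *\<^sub>R b"
  have "s \<in> I"
    unfolding s_def using convex_on_imp_convex[OF f] ab l by (simp add: convex_alt)
  have affine: "\<alpha> + \<beta> * s = (1 - l) * (\<alpha> + \<beta> * a) + l * (\<alpha> + \<beta> * b)"
    by (simp add: s_def algebra_simps)
  have "persp \<phi> (f s) (\<alpha> + \<beta> * s) \<le> persp \<phi> ((1 - l) * f a + l * f b) (\<alpha> + \<beta> * s)"
    using convex_onD[OF f, of l a b] l ab nonneg[OF \<open>s \<in> I\<close>]
    by (intro persp_mono[OF mo]) (simp_all add: s_def)
  also have "\<dots> \<le> (1 - l) * persp \<phi> (f a) (\<alpha> + \<beta> * a) + l * persp \<phi> (f b) (\<alpha> + \<beta> * b)"
    unfolding affine using l ab nonneg zero by (intro persp_convex[OF cv]) auto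
  finally show "persp \<phi> (f ((1 - l) *\<^sub>R a + l *\<^sub>R b)) (\<alpha> + \<beta> * ((1 - l) *\<^sub>R a + l *\<^sub>R b))
      \<le> (1 - l) * persp \<phi> (f a) (\<alpha> + \<beta> * a) + l * persp \<phi> (f b) (\<alpha> + \<beta> * b)"
    by (simp only: s_def)
qed (use convex_on_imp_convex[OF f] in simp)

section \<open>Increasing convex order of \<open>\<bar>\<Delta>\<bar>\<close>\<close>

lemma bdmc_nonneg: "bdmc W \<Longrightarrow> 0 \<le> W x y"
  by (simp add: bdmc_def)

lemma qW_nonneg: "bdmc W \<Longrightarrow> 0 \<le> qW W y"
  by (simp add: qW_def bdmc_nonneg)

lemma abs_DeltaW_le_1:
  assumes "bdmc W"
  shows "\<bar>DeltaW W y\<bar> \<le> 1"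
  using bdmc_nonneg[OF assms, of False y] bdmc_nonneg[OF assms, of True y]
  by (auto simp: DeltaW_def abs_le_iff divide_le_eq_1 field_simps)

text \<open>Also correct when \<open>q\<^sub>W(y) = 0\<close>: then both transition probabilities vanish and \<open>\<Delta>\<^sub>W(y) = 0\<close>.\<close>

lemma bdmc_False_eq: "bdmc W \<Longrightarrow> W False y = (1 + DeltaW W y) * qW W y"
  and bdmc_True_eq: "bdmc W \<Longrightarrow> W True y = (1 - DeltaW W y) * qW W y"
  using bdmc_nonneg[of W False y] bdmc_nonneg[of W True y]
  by (cases "W False y + W True y = 0"; simp add: DeltaW_def qW_def field_simps)+

lemma qW_mult_abs_DeltaW:
  assumes "0 \<le> W False y + W True y"
  shows "qW W y * \<phi> \<bar>DeltaW W y\<bar> = persp \<phi> (\<bar>W False y - W True y\<bar> / 2) (qW W y)"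
  using assms by (simp add: persp_def qW_def DeltaW_def abs_divide)

lemma exp_absDelta_mono:
  assumes "bdmc W" "\<And>t. t \<in> {0..1} \<Longrightarrow> g t \<le> g' t"
  shows "exp_absDelta W g \<le> exp_absDelta W g'"
  unfolding exp_absDelta_def
  using assms abs_DeltaW_le_1[OF assms(1)] qW_nonneg[OF assms(1)]
  by (intro sum_mono mult_left_mono) auto

lemma absDelta_icx_le:
  assumes W: "bdmc W" and V: "bdmc V" and icx: "absDelta_icx V W"
    and "convex_on {0..1} h" "mono_on {0..1} h"
  shows "exp_absDelta V h \<le> exp_absDelta W h"
proof -
  let ?S = "range (\<lambda>z. \<bar>DeltaW V z\<bar>) \<union> range (\<lambda>y. \<bar>DeltaW W y\<bar>)"
  have "?S \<subseteq> {0..1}"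
    using abs_DeltaW_le_1[OF W] abs_DeltaW_le_1[OF V] by auto
  then obtain \<psi> where \<psi>: "mono \<psi>" "convex_on UNIV \<psi>" "\<And>p. p \<in> ?S \<Longrightarrow> \<psi> p = h p"
    using mono_convex_extension_finite[of ?S] assms(4,5) by auto
  have "exp_absDelta V h = exp_absDelta V \<psi>" "exp_absDelta W h = exp_absDelta W \<psi>"
    unfolding exp_absDelta_def using \<psi>(3) by simp_all
  with icx \<psi>(1,2) show ?thesis
    by (simp add: absDelta_icx_def)
qed

definition exp_absDelta_pair ::
  "(bool \<Rightarrow> 'y::finite \<Rightarrow> real) \<Rightarrow> (bool \<Rightarrow> 'z::finite \<Rightarrow> real) \<Rightarrow> (real \<Rightarrow> real \<Rightarrow> real) \<Rightarrow> real" where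
  "exp_absDelta_pair W V F =
     (\<Sum>y\<in>UNIV. \<Sum>z\<in>UNIV. qW W y * qW V z * F \<bar>DeltaW W y\<bar> \<bar>DeltaW V z\<bar>)"

lemma exp_absDelta_pair_eq_left:
  "exp_absDelta_pair W V F = exp_absDelta W (\<lambda>s. exp_absDelta V (F s))"
  by (simp add: exp_absDelta_pair_def exp_absDelta_def sum_distrib_left sum_distrib_right mult_ac)

lemma exp_absDelta_pair_eq_right:
  "exp_absDelta_pair W V F = exp_absDelta V (\<lambda>t. exp_absDelta W (\<lambda>s. F s t))"
  unfolding exp_absDelta_pair_def exp_absDelta_def sum_distrib_left sum_distrib_right
  by (subst sum.swap) (simp add: mult_ac)

lemma absDelta_icx_pair_le:
  assumes W: "bdmc W" and V: "bdmc V" and icx: "absDelta_icx V W"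
    and F1: "\<And>t. t \<in> {0..1} \<Longrightarrow> convex_on {0..1} (\<lambda>s. F s t) \<and> mono_on {0..1} (\<lambda>s. F s t)"
    and F2: "\<And>s. s \<in> {0..1} \<Longrightarrow> convex_on {0..1} (F s) \<and> mono_on {0..1} (F s)"
  shows "exp_absDelta_pair V V F \<le> exp_absDelta_pair W W F"
proof -
  have "exp_absDelta_pair V V F = exp_absDelta V (\<lambda>t. exp_absDelta V (\<lambda>s. F s t))"
    by (rule exp_absDelta_pair_eq_right)
  also have "\<dots> \<le> exp_absDelta V (\<lambda>t. exp_absDelta W (\<lambda>s. F s t))"
    using F1 by (intro exp_absDelta_mono[OF V] absDelta_icx_le[OF W V icx]) auto
  also have "\<dots> = exp_absDelta_pair W V F"
    by (rule exp_absDelta_pair_eq_right[symmetric])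
  also have "\<dots> = exp_absDelta W (\<lambda>s. exp_absDelta V (F s))"
    by (rule exp_absDelta_pair_eq_left)
  also have "\<dots> \<le> exp_absDelta W (\<lambda>s. exp_absDelta W (F s))"
    using F2 by (intro exp_absDelta_mono[OF W] absDelta_icx_le[OF W V icx]) auto
  also have "\<dots> = exp_absDelta_pair W W F"
    by (rule exp_absDelta_pair_eq_left[symmetric])
  finally show ?thesis .
qed

section \<open>The polar transforms\<close>

lemma exp_absDelta_chan_minus:
  "exp_absDelta (chan_minus W) \<phi> = exp_absDelta_pair W W (\<lambda>s t. \<phi> (s * t))"
proof -
  have q: "qW (chan_minus W) (y1, y2) = qW W y1 * qW W y2" for y1 y2
    by (simp add: qW_def chan_minus_def UNIV_bool algebra_simps)
  have d: "DeltaW (chan_minus W) (y1, y2) = DeltaW W y1 * DeltaW W y2" for y1 y2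
  proof -
    have diff: "chan_minus W False (y1, y2) - chan_minus W True (y1, y2)
        = (W False y1 - W True y1) * (W False y2 - W True y2) / 2"
      and sum: "chan_minus W False (y1, y2) + chan_minus W True (y1, y2)
        = (W False y1 + W True y1) * (W False y2 + W True y2) / 2"
      by (simp_all add: chan_minus_def UNIV_bool algebra_simps)
    show ?thesis
      unfolding DeltaW_def diff sum by simp
  qed
  show ?thesis
    unfolding exp_absDelta_def exp_absDelta_pair_def UNIV_Times_UNIV[symmetric] sum.cartesian_product'
    by (simp add: q d abs_mult)
qed

lemma unit_interval_one_minus_mult:
  fixes s t :: real
  assumes "s \<in> {0..1}" "t \<in> {0..1}"
  shows "0 \<le> 1 - s * t" and "1 - s * t = 0 \<Longrightarrow> s = t"
proof -
  have "s * t \<le> s" "s * t \<le> t"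
    using assms mult_left_le mult_left_le_one_le by auto
  then show "0 \<le> 1 - s * t" and "1 - s * t = 0 \<Longrightarrow> s = t"
    using assms by auto
qed

text \<open>Given outputs of two copies of \<open>W\<close> with \<open>\<Delta> = s, t\<close>, the output bit \<open>u\<^sub>1\<close> of \<open>W\<^sup>+\<close> takes its two
  values with probabilities \<open>(1 \<plusminus> s t)/2\<close>, and \<open>\<Delta>\<^sub>W\<^sub>+\<close> is then \<open>(s \<plusminus> t)/(1 \<plusminus> s t)\<close>; the kernel is the
  resulting conditional expectation of \<open>\<phi>(\<bar>\<Delta>\<^sub>W\<^sub>+\<bar>)\<close>.\<close>

definition plus_kernel :: "(real \<Rightarrow> real) \<Rightarrow> real \<Rightarrow> real \<Rightarrow> real" where
  "plus_kernel \<phi> s t = (persp \<phi> \<bar>s + t\<bar> (1 + s * t) + persp \<phi> \<bar>s - t\<bar> (1 - s * t)) / 2"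

lemma plus_kernel_commute: "plus_kernel \<phi> s t = plus_kernel \<phi> t s"
  unfolding plus_kernel_def by (simp add: abs_minus_commute add.commute mult.commute)

lemma plus_kernel_abs: "plus_kernel \<phi> s t = plus_kernel \<phi> \<bar>s\<bar> \<bar>t\<bar>"
proof (cases "0 \<le> s * t")
  case True
  then have "\<bar>s\<bar> * \<bar>t\<bar> = s * t" "\<bar>\<bar>s\<bar> + \<bar>t\<bar>\<bar> = \<bar>s + t\<bar>" "\<bar>\<bar>s\<bar> - \<bar>t\<bar>\<bar> = \<bar>s - t\<bar>"
    by (auto simp: abs_mult[symmetric] abs_if zero_le_mult_iff)
  then show ?thesis unfolding plus_kernel_def by simp
next
  case False
  then have "\<bar>s\<bar> * \<bar>t\<bar> = - (s * t)" "\<bar>\<bar>s\<bar> + \<bar>t\<bar>\<bar> = \<bar>s - t\<bar>" "\<bar>\<bar>s\<bar> - \<bar>t\<bar>\<bar> = \<bar>s + t\<bar>"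
    by (auto simp: abs_mult[symmetric] abs_if zero_le_mult_iff)
  then show ?thesis unfolding plus_kernel_def by simp
qed

lemma plus_kernel_convex:
  assumes "mono \<phi>" "convex_on UNIV \<phi>" "t \<in> {0..1}"
  shows "convex_on {0..1} (\<lambda>s. plus_kernel \<phi> s t)"
proof -
  have dist: "convex_on {0..1} (\<lambda>s. \<bar>s - a\<bar>)" for a :: real
    using convex_on_dist[of "{0..1}" a] by (simp add: dist_real_def abs_minus_commute)
  have "0 < 1 + t * s" if "s \<in> {0..1}" for s
    using assms(3) that by (auto intro: add_pos_nonneg)
  then have "convex_on {0..1} (\<lambda>s. persp \<phi> \<bar>s - (- t)\<bar> (1 + t * s))"
    using assms by (intro convex_on_persp_affine dist) force+
  moreover have "convex_on {0..1} (\<lambda>s. persp \<phi> \<bar>s - t\<bar> (1 + (- t) * s))"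
    using assms unit_interval_one_minus_mult[of _ t]
    by (intro convex_on_persp_affine dist) (auto simp: mult.commute)
  ultimately show ?thesis
    unfolding plus_kernel_def by (intro convex_on_cdiv convex_on_add) (simp_all add: mult.commute)
qed

text \<open>Subadditivity of the perspective merges the two terms into \<open>\<phi>(max s t)\<close>.\<close>

lemma plus_kernel_zero_le:
  assumes "mono \<phi>" "convex_on UNIV \<phi>" "s \<in> {0..1}" "t \<in> {0..1}"
  shows "plus_kernel \<phi> 0 t \<le> plus_kernel \<phi> s t"
proof -
  have "plus_kernel \<phi> 0 t = \<phi> t"
    using assms by (simp add: plus_kernel_def persp_def)
  also have "\<dots> \<le> \<phi> ((\<bar>s + t\<bar> + \<bar>s - t\<bar>) / 2)"
    using assms by (intro monoD[OF assms(1)]) auto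
  also have "\<dots> = persp \<phi> (\<bar>s + t\<bar> + \<bar>s - t\<bar>) ((1 + s * t) + (1 - s * t)) / 2"
    by (simp add: persp_def)
  also have "\<dots> \<le> plus_kernel \<phi> s t"
    unfolding plus_kernel_def using assms unit_interval_one_minus_mult[of s t] add_pos_nonneg[of 1 "s * t"]
    by (intro divide_right_mono persp_add_le) auto
  finally show ?thesis .
qed

lemma plus_kernel_mono_convex:
  assumes "mono \<phi>" "convex_on UNIV \<phi>" "t \<in> {0..1}"
  shows "convex_on {0..1} (\<lambda>s. plus_kernel \<phi> s t) \<and> mono_on {0..1} (\<lambda>s. plus_kernel \<phi> s t)"
  using assms plus_kernel_convex plus_kernel_zero_le mono_on_if_convex_on_min_left by blast

lemma exp_absDelta_chan_plus:
  assumes W: "bdmc W"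
  shows "exp_absDelta (chan_plus W) \<phi> = exp_absDelta_pair W W (plus_kernel \<phi>)"
proof -
  have "(\<Sum>u\<in>UNIV. qW (chan_plus W) ((y1, y2), u) * \<phi> \<bar>DeltaW (chan_plus W) ((y1, y2), u)\<bar>)
      = qW W y1 * qW W y2 * plus_kernel \<phi> \<bar>DeltaW W y1\<bar> \<bar>DeltaW W y2\<bar>" for y1 y2
  proof -
    define s t c where "s = DeltaW W y1" and "t = DeltaW W y2" and "c = qW W y1 * qW W y2 / 2"
    have "0 \<le> c"
      using qW_nonneg[OF W] by (simp add: c_def)
    have W_eq: "W False y1 = (1 + s) * qW W y1" "W True y1 = (1 - s) * qW W y1"
      "W False y2 = (1 + t) * qW W y2" "W True y2 = (1 - t) * qW W y2"
      using bdmc_False_eq[OF W] bdmc_True_eq[OF W] by (simp_all add: s_def t_def)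
    let ?P = "\<lambda>x u. chan_plus W x ((y1, y2), u)"
    have "0 \<le> ?P False u + ?P True u" for u
      using W by (simp add: chan_plus_def bdmc_nonneg)
    then have "(\<Sum>u\<in>UNIV. qW (chan_plus W) ((y1, y2), u) * \<phi> \<bar>DeltaW (chan_plus W) ((y1, y2), u)\<bar>)
        = persp \<phi> (\<bar>?P False False - ?P True False\<bar> / 2) ((?P False False + ?P True False) / 2)
        + persp \<phi> (\<bar>?P False True - ?P True True\<bar> / 2) ((?P False True + ?P True True) / 2)"
      by (simp add: UNIV_bool qW_mult_abs_DeltaW) (simp add: qW_def)
    also have "\<dots> = persp \<phi> (c * \<bar>s + t\<bar>) (c * (1 + s * t)) + persp \<phi> (c * \<bar>s - t\<bar>) (c * (1 - s * t))"
    proof -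
      have "?P False False - ?P True False = 2 * c * (s + t)"
        "?P False True - ?P True True = 2 * c * (t - s)"
        "(?P False False + ?P True False) / 2 = c * (1 + s * t)"
        "(?P False True + ?P True True) / 2 = c * (1 - s * t)"
        by (simp_all add: chan_plus_def W_eq c_def field_simps)
      then show ?thesis
        using \<open>0 \<le> c\<close> by (simp add: abs_mult abs_minus_commute)
    qed
    also have "\<dots> = 2 * c * plus_kernel \<phi> s t"
      unfolding persp_scale plus_kernel_def by (simp add: distrib_left)
    finally show ?thesis
      by (simp add: c_def s_def t_def flip: plus_kernel_abs)
  qed
  then show ?thesis
    unfolding exp_absDelta_def exp_absDelta_pair_def UNIV_Times_UNIV[symmetric] sum.cartesian_product'
    by simp
qed

theorem theorem1:
  fixes W :: "bool \<Rightarrow> 'y::finite \<Rightarrow> real" and V :: "bool \<Rightarrow> 'z::finite \<Rightarrow> real"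
  assumes "bdmc W" and "bdmc V" and "absDelta_icx V W"
  shows "absDelta_icx (chan_minus V) (chan_minus W) \<and> absDelta_icx (chan_plus V) (chan_plus W)"
proof -
  have "exp_absDelta (chan_minus V) \<phi> \<le> exp_absDelta (chan_minus W) \<phi> \<and>
        exp_absDelta (chan_plus V) \<phi> \<le> exp_absDelta (chan_plus W) \<phi>"
    if \<phi>: "mono \<phi>" "convex_on UNIV \<phi>" for \<phi>
  proof
    have "convex_on {0..1} (\<lambda>s. \<phi> (s * t)) \<and> mono_on {0..1} (\<lambda>s. \<phi> (s * t))" if "t \<in> {0..1}" for t
      using that convex_on_subset[OF convex_on_mult_right[OF \<phi>(2)]]
      by (auto intro!: mono_onI monoD[OF \<phi>(1)] mult_right_mono)
    then show "exp_absDelta (chan_minus V) \<phi> \<le> exp_absDelta (chan_minus W) \<phi>"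
      unfolding exp_absDelta_chan_minus by (intro absDelta_icx_pair_le[OF assms]) (auto simp: mult.commute)
    show "exp_absDelta (chan_plus V) \<phi> \<le> exp_absDelta (chan_plus W) \<phi>"
      unfolding exp_absDelta_chan_plus[OF assms(1)] exp_absDelta_chan_plus[OF assms(2)]
      using plus_kernel_mono_convex[OF \<phi>]
      by (intro absDelta_icx_pair_le[OF assms]) (auto simp: plus_kernel_commute[of \<phi> _])
  qed
  then show ?thesis
    unfolding absDelta_icx_def by blast
qed

end
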